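(* Let $\Phi:(0,1]\to\mathbb R$ be measurable with $\delta_\Phi(X_1,X_2)=\ln Z_2-\Phi(T)$, $T=Z_1/Z_2$, having finite risk, and let $\Phi_*(t)=\psi(2\alpha)-\ln(1+t)$, $t\in(0,1]$. Suppose $\mathbb P_{\underline\theta}(\Phi(T)>\Phi_*(T))>0$ for some $\underline\theta\in\Theta$. Define $$\Phi_I(t)=\begin{cases}\psi(2\alpha)-\ln(1+t), & \text{if } \Phi(t)>\psi(2\alpha)-\ln(1+t),\\ \Phi(t), & \text{otherwise.}\end{cases}$$ Then $\delta_{\Phi_I}(X_1,X_2)=\ln Z_2-\Phi_I(T)$ dominates $\delta_\Phi$ for estimating $H_S(\underline\theta)$ under squared error loss, i.e. $R(\underline\theta,\delta_{\Phi_I})\le R(\underline\theta,\delta_\Phi)$ for all $\underline\theta\in\Theta$ with strict inequality for some $\underline\theta$.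
   Context: Fix a known $\alpha>0$. $X_1,X_2$ are independent, $X_i$ having density $f(x\mid\theta_i)=\frac{x^{\alpha-1}e^{-x/\theta_i}}{\Gamma(\alpha)\theta_i^{\alpha}}$, $x>0$, with unknown $\underline\theta=(\theta_1,\theta_2)\in\Theta=(0,\infty)^2$. $Z_1=\min\{X_1,X_2\}$, $Z_2=\max\{X_1,X_2\}$. $H_S(\underline\theta)=\ln\theta_1\, I(X_1\ge X_2)+\ln\theta_2\, I(X_1<X_2)$. $\psi$ is the digamma function. Risk: $R(\underline\theta,\delta)=\mathbb E_{\underline\theta}(\delta(X_1,X_2)-H_S(\underline\theta))^2$. *)

theory Defs
  imports "HOL-Probability.Probability"
begin

definition gamma_dens :: "real \<Rightarrow> real \<Rightarrow> real \<Rightarrow> real" where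
  "gamma_dens \<alpha> \<theta> x =
     (if 0 < x then x powr (\<alpha> - 1) * exp (- x / \<theta>) / (Gamma \<alpha> * \<theta> powr \<alpha>) else 0)"

definition joint :: "real \<Rightarrow> real \<Rightarrow> real \<Rightarrow> (real \<times> real) measure" where
  "joint \<alpha> \<theta>1 \<theta>2 =
     density (lborel \<Otimes>\<^sub>M lborel)
       (\<lambda>(x1, x2). ennreal (gamma_dens \<alpha> \<theta>1 x1 * gamma_dens \<alpha> \<theta>2 x2))"

definition Z1 :: "real \<times> real \<Rightarrow> real" where "Z1 = (\<lambda>(x1, x2). min x1 x2)"
definition Z2 :: "real \<times> real \<Rightarrow> real" where "Z2 = (\<lambda>(x1, x2). max x1 x2)"
definition T :: "real \<times> real \<Rightarrow> real" where "T \<omega> = Z1 \<omega> / Z2 \<omega>"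

definition H_S :: "real \<Rightarrow> real \<Rightarrow> real \<times> real \<Rightarrow> real" where
  "H_S \<theta>1 \<theta>2 = (\<lambda>(x1, x2). ln \<theta>1 * (if x1 \<ge> x2 then 1 else 0)
                              + ln \<theta>2 * (if x1 < x2 then 1 else 0))"

definition risk :: "real \<Rightarrow> real \<Rightarrow> real \<Rightarrow> (real \<times> real \<Rightarrow> real) \<Rightarrow> real" where
  "risk \<alpha> \<theta>1 \<theta>2 \<delta> = (\<integral>\<omega>. (\<delta> \<omega> - H_S \<theta>1 \<theta>2 \<omega>)\<^sup>2 \<partial>joint \<alpha> \<theta>1 \<theta>2)"

definition finite_risk :: "real \<Rightarrow> real \<Rightarrow> real \<Rightarrow> (real \<times> real \<Rightarrow> real) \<Rightarrow> bool" where
  "finite_risk \<alpha> \<theta>1 \<theta>2 \<delta> \<longleftrightarrow>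
     integrable (joint \<alpha> \<theta>1 \<theta>2) (\<lambda>\<omega>. (\<delta> \<omega> - H_S \<theta>1 \<theta>2 \<omega>)\<^sup>2)"

definition delta :: "(real \<Rightarrow> real) \<Rightarrow> real \<times> real \<Rightarrow> real" where
  "delta \<Phi> \<omega> = ln (Z2 \<omega>) - \<Phi> (T \<omega>)"

definition Phi_star :: "real \<Rightarrow> real \<Rightarrow> real" where
  "Phi_star \<alpha> t = Digamma (2 * \<alpha>) - ln (1 + t)"

definition Phi_I :: "real \<Rightarrow> (real \<Rightarrow> real) \<Rightarrow> real \<Rightarrow> real" where
  "Phi_I \<alpha> \<Phi> t = (if \<Phi> t > Digamma (2 * \<alpha>) - ln (1 + t)
                     then Digamma (2 * \<alpha>) - ln (1 + t) else \<Phi> t)"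

end

theory Submission
  imports Defs
begin

text \<open>
  In the coordinates \<open>x = Z\<^sub>2\<close> and \<open>t = T\<close> the risk of \<open>\<delta>\<^sub>\<Phi>\<close> is an integral over
  \<open>t \<in> (0,1)\<close> of the conditional risk given \<open>T = t\<close>. For the estimate \<open>ln Z\<^sub>2 - u\<close>
  this is a convex quadratic in \<open>u\<close>, because the conditional law of \<open>Z\<^sub>2\<close> is a mixture of
  two Gamma laws of shape \<open>2\<alpha>\<close>, whose log-moments are \<open>\<psi>(2\<alpha>) - ln \<lambda>\<close>. A weighted-mean
  inequality shows that the minimiser never exceeds \<open>\<Phi>\<^sub>*(t)\<close>, whatever \<open>\<theta>\<close> is. Hence
  replacing \<open>\<Phi>(t)\<close> by \<open>\<Phi>\<^sub>*(t)\<close> where it is larger lowers the conditional risk for every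
  \<open>t\<close>, strictly where \<open>\<Phi> > \<Phi>\<^sub>*\<close>, and this set of \<open>t\<close> is not null for some \<open>\<theta>\<close>.
\<close>

section \<open>Gamma integrals and log-moments\<close>

definition gamma_kernel :: "real \<Rightarrow> real \<Rightarrow> real \<Rightarrow> real" where
  "gamma_kernel s l x = indicator {0<..} x * x powr (s - 1) * exp (- (l * x))"

lemma gamma_kernel_measurable [measurable]: "gamma_kernel s l \<in> borel_measurable borel"
  unfolding gamma_kernel_def by measurable

lemma gamma_kernel_nonneg: "0 \<le> gamma_kernel s l x"
  unfolding gamma_kernel_def by simp

lemma nn_integral_gamma_kernel:
  fixes s l :: real
  assumes s: "0 < s" and l: "0 < l"
  shows "(\<integral>\<^sup>+x. ennreal (gamma_kernel s l x) \<partial>lborel) = ennreal (Gamma s * l powr (- s))"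
proof -
  have Gamma: "Gamma s = (\<integral>\<^sup>+x. ennreal (gamma_kernel s 1 x) \<partial>lborel)"
    unfolding Gamma_conv_nn_integral_real[OF s] gamma_kernel_def
    by (intro nn_integral_cong) (auto simp: indicator_def exp_minus field_simps)
  have scale: "ennreal (gamma_kernel s l (x / l)) = ennreal (l powr (1 - s)) * ennreal (gamma_kernel s 1 x)"
    for x
  proof (cases "0 < x")
    case True
    have "(x / l) powr (s - 1) = l powr (1 - s) * x powr (s - 1)"
      using True l by (simp add: powr_divide powr_add[symmetric] divide_simps)
    then show ?thesis
      using True l by (simp add: gamma_kernel_def ennreal_mult[symmetric] field_simps)
  next
    case False
    then show ?thesis
      using l by (simp add: gamma_kernel_def zero_less_divide_iff)
  qed
  have "(\<integral>\<^sup>+x. ennreal (gamma_kernel s l x) \<partial>lborel)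
      = ennreal \<bar>1 / l\<bar> * (\<integral>\<^sup>+x. ennreal (gamma_kernel s l (0 + (1 / l) * x)) \<partial>lborel)"
    by (rule nn_integral_real_affine) (use l in auto)
  also have "\<dots> = ennreal (1 / l) * (ennreal (l powr (1 - s)) * Gamma s)"
    using l by (simp add: scale nn_integral_cmult Gamma)
  also have "\<dots> = ennreal (Gamma s * l powr (- s))"
    using l s by (simp add: ennreal_mult[symmetric] Gamma_real_pos powr_diff powr_minus field_simps)
  finally show ?thesis .
qed

lemma has_bochner_integral_gamma_kernel:
  fixes s l :: real
  assumes "0 < s" and "0 < l"
  shows "has_bochner_integral lborel (gamma_kernel s l) (Gamma s * l powr (- s))"
  using assms nn_integral_gamma_kernel[OF assms]
  by (intro has_bochner_integral_nn_integral) (auto simp: gamma_kernel_nonneg Gamma_real_pos)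

lemma integrable_gamma_kernel:
  fixes s l :: real
  assumes "0 < s" and "0 < l"
  shows "integrable lborel (gamma_kernel s l)"
  using has_bochner_integral_gamma_kernel[OF assms] by (rule integrable.intros)

lemma abs_exp_minus_one_le: "\<bar>exp u - 1\<bar> \<le> \<bar>u\<bar> * exp \<bar>u\<bar>"
  for u :: real
proof (cases "0 \<le> u")
  case True
  have "(1 - u) * exp u \<le> exp (- u) * exp u"
    using exp_ge_add_one_self[of "- u"] by (intro mult_right_mono) auto
  then show ?thesis
    using True by (simp add: exp_minus field_simps)
next
  case False
  have "1 + u \<le> exp u" and "exp u \<le> 1"
    using False by simp_all
  then have "\<bar>exp u - 1\<bar> \<le> \<bar>u\<bar>"
    using False by linarith
  also have "\<dots> \<le> \<bar>u\<bar> * exp \<bar>u\<bar>"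
    by (simp add: mult_le_cancel_left1)
  finally show ?thesis .
qed

lemma abs_ln_le_powr:
  fixes x d :: real
  assumes x: "0 < x" and d: "0 < d"
  shows "\<bar>ln x\<bar> \<le> (x powr d + x powr (- d)) / d"
proof -
  have "d * ln x \<le> x powr d" and "- d * ln x \<le> x powr (- d)"
    using ln_le_minus_one[of "x powr d"] ln_le_minus_one[of "x powr (- d)"] x
    by (auto simp: ln_powr)
  moreover have "0 \<le> x powr d" and "0 \<le> x powr (- d)"
    by simp_all
  ultimately have "d * \<bar>ln x\<bar> \<le> x powr d + x powr (- d)"
    by (cases "0 \<le> ln x") (simp_all add: add_increasing add_increasing2)
  then show ?thesis
    using d by (simp add: field_simps)
qed

lemma abs_powr_minus_one_le:
  fixes x h d :: real
  assumes x: "0 < x" and h: "\<bar>h\<bar> \<le> d"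
  shows "\<bar>x powr h - 1\<bar> \<le> \<bar>h\<bar> * \<bar>ln x\<bar> * (x powr d + x powr (- d))"
proof -
  have "exp \<bar>h * ln x\<bar> \<le> exp (d * \<bar>ln x\<bar>)"
    using h by (simp add: abs_mult mult_right_mono)
  also have "\<dots> \<le> x powr d + x powr (- d)"
    using x by (cases "0 \<le> ln x") (simp_all add: powr_def mult.commute)
  finally have "\<bar>h * ln x\<bar> * exp \<bar>h * ln x\<bar> \<le> \<bar>h * ln x\<bar> * (x powr d + x powr (- d))"
    by (intro mult_left_mono) auto
  moreover have "\<bar>x powr h - 1\<bar> \<le> \<bar>h * ln x\<bar> * exp \<bar>h * ln x\<bar>"
    using x abs_exp_minus_one_le[of "h * ln x"] by (simp add: powr_def mult.commute)
  ultimately show ?thesis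
    by (simp add: abs_mult)
qed

lemma abs_powr_difference_quotient_le:
  fixes x d u :: real
  assumes x: "0 < x" and d: "0 < d" and u: "1 / d \<le> u"
  shows "\<bar>(x powr (1 / u) - 1) * u\<bar> \<le> (x powr d + x powr (- d))\<^sup>2 / d"
proof -
  have u_pos: "0 < u"
    using d u by (smt (verit) divide_pos_pos)
  have "\<bar>1 / u\<bar> \<le> d"
    using u u_pos d by (simp add: field_simps)
  from abs_powr_minus_one_le[OF x this]
  have "\<bar>x powr (1 / u) - 1\<bar> * u \<le> \<bar>ln x\<bar> * (x powr d + x powr (- d))"
    using u_pos by (simp add: field_simps)
  then have "\<bar>(x powr (1 / u) - 1) * u\<bar> \<le> \<bar>ln x\<bar> * (x powr d + x powr (- d))"
    using u_pos by (simp add: abs_mult)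
  also have "\<dots> \<le> (x powr d + x powr (- d)) / d * (x powr d + x powr (- d))"
    by (intro mult_right_mono abs_ln_le_powr x d) auto
  finally show ?thesis
    by (simp add: power2_eq_square)
qed

lemma integrable_gamma_kernel_powr_sum_sq:
  fixes s l d :: real
  assumes s: "0 < s" and l: "0 < l" and d: "0 < d" "2 * d < s"
  shows "integrable lborel (\<lambda>x. gamma_kernel s l x * (x powr d + x powr (- d))\<^sup>2)"
proof -
  have "integrable lborel (\<lambda>x. gamma_kernel (s + 2 * d) l x + 2 * gamma_kernel s l x
                                + gamma_kernel (s - 2 * d) l x)"
    using s l d by (intro Bochner_Integration.integrable_add integrable_mult_right
        integrable_gamma_kernel) auto
  moreover have "gamma_kernel (s + 2 * d) l x + 2 * gamma_kernel s l x + gamma_kernel (s - 2 * d) l x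
      = gamma_kernel s l x * (x powr d + x powr (- d))\<^sup>2" for x
  proof (cases "0 < x")
    case True
    have "x powr (s + 2 * d - 1) = x powr (s - 1) * (x powr d * x powr d)"
      and "x powr (s - 2 * d - 1) = x powr (s - 1) * (x powr (- d) * x powr (- d))"
      and "x powr d * x powr (- d) = 1"
      using True by (simp_all add: powr_add[symmetric] algebra_simps)
    then show ?thesis
      using True by (simp add: gamma_kernel_def power2_eq_square algebra_simps)
  qed (simp add: gamma_kernel_def)
  ultimately show ?thesis
    by simp
qed

lemma tendsto_difference_quotient_at_top:
  fixes f :: "real \<Rightarrow> real"
  assumes "(f has_real_derivative D) (at a)"
  shows "((\<lambda>u. (f (a + 1 / u) - f a) * u) \<longlongrightarrow> D) at_top"
proof -
  have "((\<lambda>h. (f (a + h) - f a) / h) \<longlongrightarrow> D) (at_right 0)"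
    using assms unfolding DERIV_def by (auto intro: tendsto_mono[OF at_le])
  from filterlim_compose[OF this filterlim_inverse_at_right_top] show ?thesis
    by (simp add: inverse_eq_divide)
qed

lemma has_real_derivative_Gamma_rate:
  fixes s l :: real
  assumes s: "0 < s" and l: "0 < l"
  shows "((\<lambda>a. Gamma a * l powr (- a)) has_real_derivative
           Gamma s * l powr (- s) * (Digamma s - ln l)) (at s)"
proof -
  have "((\<lambda>a. Gamma a * exp (- (a * ln l))) has_real_derivative
           Gamma s * Digamma s * exp (- (s * ln l)) + Gamma s * (exp (- (s * ln l)) * (- ln l))) (at s)"
    using s by (auto intro!: derivative_eq_intros simp: nonpos_Ints_def)
  moreover have "l powr (- a) = exp (- (a * ln l))" for a
    using l by (simp add: powr_def)
  ultimately show ?thesis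
    by (simp add: algebra_simps)
qed

lemma gamma_kernel_shape_shift: "gamma_kernel (s + h) l x = gamma_kernel s l x * x powr h"
proof -
  have "x powr (s + h - 1) = x powr (s - 1) * x powr h"
    unfolding powr_add[symmetric] by (simp add: algebra_simps)
  then show ?thesis
    by (simp add: gamma_kernel_def mult_ac)
qed

lemma tendsto_gamma_kernel_difference_quotient:
  "((\<lambda>u. gamma_kernel s l x * (x powr (1 / u) - 1) * u) \<longlongrightarrow> gamma_kernel s l x * ln x) at_top"
proof (cases "0 < x")
  case True
  have "((\<lambda>h. x powr h) has_real_derivative ln x) (at 0)"
    using DERIV_powr[where g = "\<lambda>_. x" and f = "\<lambda>h. h" and x = 0, OF DERIV_const _ DERIV_ident] True
    by simp
  from tendsto_difference_quotient_at_top[OF this] show ?thesis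
    using True by (auto simp: mult.assoc intro!: tendsto_mult_left)
qed (simp add: gamma_kernel_def)

lemma abs_gamma_kernel_difference_quotient_le:
  fixes s l x d u :: real
  assumes d: "0 < d" and u: "1 / d \<le> u"
  shows "\<bar>gamma_kernel s l x * (x powr (1 / u) - 1) * u\<bar> \<le> gamma_kernel s l x * (x powr d + x powr (- d))\<^sup>2 / d"
proof (cases "0 < x")
  case True
  have "gamma_kernel s l x * \<bar>(x powr (1 / u) - 1) * u\<bar>
      \<le> gamma_kernel s l x * ((x powr d + x powr (- d))\<^sup>2 / d)"
    by (intro mult_left_mono abs_powr_difference_quotient_le True d u gamma_kernel_nonneg)
  then show ?thesis
    by (simp add: abs_mult gamma_kernel_nonneg mult.assoc)
qed (simp add: gamma_kernel_def)

lemma gamma_kernel_ln_dominated_limit: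
  fixes s l :: real
  assumes s: "0 < s" and l: "0 < l"
  shows "integrable lborel (\<lambda>x. gamma_kernel s l x * ln x)"
    and "((\<lambda>u. \<integral>x. gamma_kernel s l x * (x powr (1 / u) - 1) * u \<partial>lborel)
           \<longlongrightarrow> (\<integral>x. gamma_kernel s l x * ln x \<partial>lborel)) at_top"
proof -
  define d where "d = s / 4"
  have d: "0 < d" "2 * d < s"
    using s by (auto simp: d_def)
  have w: "integrable lborel (\<lambda>x. gamma_kernel s l x * (x powr d + x powr (- d))\<^sup>2 / d)"
    using integrable_gamma_kernel_powr_sum_sq[OF s l d] by simp
  have lim: "AE x in lborel. ((\<lambda>u. gamma_kernel s l x * (x powr (1 / u) - 1) * u)
      \<longlongrightarrow> gamma_kernel s l x * ln x) at_top"
    by (simp add: tendsto_gamma_kernel_difference_quotient)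
  have bound: "\<forall>\<^sub>F u in at_top. AE x in lborel.
      norm (gamma_kernel s l x * (x powr (1 / u) - 1) * u) \<le> gamma_kernel s l x * (x powr d + x powr (- d))\<^sup>2 / d"
    using eventually_ge_at_top[of "1 / d"]
    by eventually_elim (simp add: abs_gamma_kernel_difference_quotient_le[OF d(1)])
  have F: "(\<lambda>x. gamma_kernel s l x * ln x) \<in> borel_measurable lborel"
    and S: "(\<lambda>x. gamma_kernel s l x * (x powr (1 / u) - 1) * u) \<in> borel_measurable lborel" for u
    by measurable
  show "integrable lborel (\<lambda>x. gamma_kernel s l x * ln x)"
    by (rule integrable_dominated_convergence_at_top[OF F S w lim bound])
  show "((\<lambda>u. \<integral>x. gamma_kernel s l x * (x powr (1 / u) - 1) * u \<partial>lborel)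
           \<longlongrightarrow> (\<integral>x. gamma_kernel s l x * ln x \<partial>lborel)) at_top"
    by (rule integral_dominated_convergence_at_top[OF F S w lim bound])
qed

text \<open>Differentiation under the integral sign in the shape parameter.\<close>
lemma has_bochner_integral_gamma_kernel_ln:
  fixes s l :: real
  assumes s: "0 < s" and l: "0 < l"
  shows "has_bochner_integral lborel (\<lambda>x. gamma_kernel s l x * ln x)
           (Gamma s * l powr (- s) * (Digamma s - ln l))"
proof -
  have "((\<lambda>u. \<integral>x. gamma_kernel s l x * (x powr (1 / u) - 1) * u \<partial>lborel)
           \<longlongrightarrow> Gamma s * l powr (- s) * (Digamma s - ln l)) at_top"
  proof (rule Lim_transform_eventually)
    show "((\<lambda>u. (Gamma (s + 1 / u) * l powr (- (s + 1 / u)) - Gamma s * l powr (- s)) * u)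
            \<longlongrightarrow> Gamma s * l powr (- s) * (Digamma s - ln l)) at_top"
      by (rule tendsto_difference_quotient_at_top[OF has_real_derivative_Gamma_rate[OF s l]])
    show "\<forall>\<^sub>F u in at_top. (Gamma (s + 1 / u) * l powr (- (s + 1 / u)) - Gamma s * l powr (- s)) * u
            = (\<integral>x. gamma_kernel s l x * (x powr (1 / u) - 1) * u \<partial>lborel)"
      using eventually_gt_at_top[of 0]
    proof eventually_elim
      case (elim u)
      then have "0 < s + 1 / u"
        using s by (simp add: add_pos_pos)
      then have hbi: "has_bochner_integral lborel (\<lambda>x. (gamma_kernel (s + 1 / u) l x - gamma_kernel s l x) * u)
          ((Gamma (s + 1 / u) * l powr (- (s + 1 / u)) - Gamma s * l powr (- s)) * u)"
        by (intro has_bochner_integral_mult_left has_bochner_integral_diff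
            has_bochner_integral_gamma_kernel[OF \<open>0 < s + 1 / u\<close> l] has_bochner_integral_gamma_kernel[OF s l])
      have "(\<lambda>x. (gamma_kernel (s + 1 / u) l x - gamma_kernel s l x) * u)
          = (\<lambda>x. gamma_kernel s l x * (x powr (1 / u) - 1) * u)"
        by (simp add: gamma_kernel_shape_shift[of s "1 / u"] right_diff_distrib)
      with hbi have "has_bochner_integral lborel (\<lambda>x. gamma_kernel s l x * (x powr (1 / u) - 1) * u)
          ((Gamma (s + 1 / u) * l powr (- (s + 1 / u)) - Gamma s * l powr (- s)) * u)"
        by (simp only:)
      then show ?case
        by (rule has_bochner_integral_integral_eq[symmetric])
    qed
  qed
  from tendsto_unique[OF _ gamma_kernel_ln_dominated_limit(2)[OF s l] this]
  show ?thesis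
    using gamma_kernel_ln_dominated_limit(1)[OF s l] by (simp add: has_bochner_integral_iff)
qed

lemma integrable_gamma_kernel_ln_sq:
  fixes s l :: real
  assumes s: "0 < s" and l: "0 < l"
  shows "integrable lborel (\<lambda>x. gamma_kernel s l x * (ln x)\<^sup>2)"
proof (rule Bochner_Integration.integrable_bound)
  define d where "d = s / 4"
  have d: "0 < d" "2 * d < s"
    using s by (auto simp: d_def)
  show "integrable lborel (\<lambda>x. gamma_kernel s l x * (x powr d + x powr (- d))\<^sup>2 / d\<^sup>2)"
    using integrable_gamma_kernel_powr_sum_sq[OF s l d] by simp
  show "AE x in lborel. norm (gamma_kernel s l x * (ln x)\<^sup>2)
          \<le> norm (gamma_kernel s l x * (x powr d + x powr (- d))\<^sup>2 / d\<^sup>2)"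
  proof (intro AE_I2)
    fix x :: real
    show "norm (gamma_kernel s l x * (ln x)\<^sup>2)
          \<le> norm (gamma_kernel s l x * (x powr d + x powr (- d))\<^sup>2 / d\<^sup>2)"
    proof (cases "0 < x")
      case True
      have "\<bar>ln x\<bar>\<^sup>2 \<le> ((x powr d + x powr (- d)) / d)\<^sup>2"
        by (intro power_mono abs_ln_le_powr True d(1)) simp
      then have "gamma_kernel s l x * (ln x)\<^sup>2
          \<le> gamma_kernel s l x * ((x powr d + x powr (- d))\<^sup>2 / d\<^sup>2)"
        by (intro mult_left_mono gamma_kernel_nonneg) (simp add: power_divide)
      then show ?thesis
        by (simp add: abs_mult gamma_kernel_nonneg)
    qed (simp add: gamma_kernel_def)
  qed
qed (simp add: gamma_kernel_def)

text \<open>\<open>gamma_ln_sq_moment s l d\<close> is \<open>\<Gamma>(s) l\<^sup>-\<^sup>s\<close> times the expected squared distance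
  of \<open>ln X\<close> from \<open>d\<close>, where \<open>X\<close> has the Gamma law with shape \<open>s\<close> and rate \<open>l\<close>.\<close>
definition gamma_ln_sq_moment :: "real \<Rightarrow> real \<Rightarrow> real \<Rightarrow> real" where
  "gamma_ln_sq_moment s l d = (\<integral>x. gamma_kernel s l x * (ln x - d)\<^sup>2 \<partial>lborel)"

lemma gamma_ln_sq_moment_nonneg: "0 \<le> gamma_ln_sq_moment s l d"
  unfolding gamma_ln_sq_moment_def by (intro integral_nonneg_AE AE_I2 mult_nonneg_nonneg gamma_kernel_nonneg) auto

lemma has_bochner_integral_gamma_ln_sq_moment:
  fixes s l d :: real
  assumes s: "0 < s" and l: "0 < l"
  shows "has_bochner_integral lborel (\<lambda>x. gamma_kernel s l x * (ln x - d)\<^sup>2)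
           (gamma_ln_sq_moment s l (Digamma s - ln l) + Gamma s * l powr (- s) * (d - (Digamma s - ln l))\<^sup>2)"
proof -
  define m where "m = Digamma s - ln l"
  define E where "E = Gamma s * l powr (- s)"
  have "(\<lambda>x. gamma_kernel s l x * (ln x - d)\<^sup>2)
      = (\<lambda>x. gamma_kernel s l x * (ln x)\<^sup>2 - 2 * d * (gamma_kernel s l x * ln x) + d\<^sup>2 * gamma_kernel s l x)"
    for d by (auto simp: power2_eq_square algebra_simps)
  moreover have "has_bochner_integral lborel
      (\<lambda>x. gamma_kernel s l x * (ln x)\<^sup>2 - 2 * d * (gamma_kernel s l x * ln x) + d\<^sup>2 * gamma_kernel s l x)
      ((\<integral>x. gamma_kernel s l x * (ln x)\<^sup>2 \<partial>lborel) - 2 * d * (E * m) + d\<^sup>2 * E)" for d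
    unfolding E_def m_def
    by (intro has_bochner_integral_add has_bochner_integral_diff has_bochner_integral_mult_right
        has_bochner_integral_integrable has_bochner_integral_gamma_kernel_ln
        has_bochner_integral_gamma_kernel integrable_gamma_kernel_ln_sq s l)
  ultimately have "has_bochner_integral lborel (\<lambda>x. gamma_kernel s l x * (ln x - d)\<^sup>2)
      ((\<integral>x. gamma_kernel s l x * (ln x)\<^sup>2 \<partial>lborel) - 2 * d * (E * m) + d\<^sup>2 * E)" for d
    by simp
  note moment = this
  have "gamma_ln_sq_moment s l m
      = (\<integral>x. gamma_kernel s l x * (ln x)\<^sup>2 \<partial>lborel) - 2 * m * (E * m) + m\<^sup>2 * E"
    using moment[of m] by (simp add: gamma_ln_sq_moment_def has_bochner_integral_iff)
  then have "(\<integral>x. gamma_kernel s l x * (ln x)\<^sup>2 \<partial>lborel) - 2 * d * (E * m) + d\<^sup>2 * E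
      = gamma_ln_sq_moment s l m + E * (d - m)\<^sup>2"
    by (simp add: power2_eq_square algebra_simps)
  with moment[of d] show ?thesis
    unfolding m_def E_def by simp
qed

lemma gamma_ln_sq_moment_eq:
  fixes s l d :: real
  assumes "0 < s" and "0 < l"
  shows "gamma_ln_sq_moment s l d
    = gamma_ln_sq_moment s l (Digamma s - ln l) + Gamma s * l powr (- s) * (d - (Digamma s - ln l))\<^sup>2"
  using has_bochner_integral_gamma_ln_sq_moment[OF assms, of d]
  by (simp add: gamma_ln_sq_moment_def has_bochner_integral_iff)

section \<open>The joint law in the coordinates \<open>Z\<^sub>2\<close> and \<open>T\<close>\<close>

lemma nn_integral_lborel_pair_scale_snd:
  fixes K :: "real \<times> real \<Rightarrow> ennreal"
  assumes [measurable]: "K \<in> borel_measurable (lborel \<Otimes>\<^sub>M lborel)"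
  shows "(\<integral>\<^sup>+\<omega>. indicator {0<..} (fst \<omega>) * K \<omega> \<partial>(lborel \<Otimes>\<^sub>M lborel))
       = (\<integral>\<^sup>+t. \<integral>\<^sup>+x. indicator {0<..} x * ennreal x * K (x, t * x) \<partial>lborel \<partial>lborel)"
proof -
  have "(\<integral>\<^sup>+\<omega>. indicator {0<..} (fst \<omega>) * K \<omega> \<partial>(lborel \<Otimes>\<^sub>M lborel))
      = (\<integral>\<^sup>+x. \<integral>\<^sup>+y. indicator {0<..} x * K (x, y) \<partial>lborel \<partial>lborel)"
    by (subst lborel.nn_integral_fst[symmetric]) auto
  also have "\<dots> = (\<integral>\<^sup>+x. \<integral>\<^sup>+t. indicator {0<..} x * ennreal x * K (x, t * x) \<partial>lborel \<partial>lborel)"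
  proof (rule nn_integral_cong)
    fix x :: real
    show "(\<integral>\<^sup>+y. indicator {0<..} x * K (x, y) \<partial>lborel)
        = (\<integral>\<^sup>+t. indicator {0<..} x * ennreal x * K (x, t * x) \<partial>lborel)"
    proof (cases "0 < x")
      case True
      have "(\<integral>\<^sup>+y. K (x, y) \<partial>lborel) = ennreal \<bar>x\<bar> * (\<integral>\<^sup>+t. K (x, 0 + x * t) \<partial>lborel)"
        by (rule nn_integral_real_affine) (use True in auto)
      then show ?thesis
        using True by (simp add: nn_integral_cmult mult.assoc mult.commute)
    qed simp
  qed
  also have "\<dots> = (\<integral>\<^sup>+t. \<integral>\<^sup>+x. indicator {0<..} x * ennreal x * K (x, t * x) \<partial>lborel \<partial>lborel)"
    by (rule lborel_pair.Fubini'[symmetric]) (simp add: case_prod_unfold)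
  finally show ?thesis .
qed

lemma nn_integral_lborel_pair_scale_fst:
  fixes K :: "real \<times> real \<Rightarrow> ennreal"
  assumes [measurable]: "K \<in> borel_measurable (lborel \<Otimes>\<^sub>M lborel)"
  shows "(\<integral>\<^sup>+\<omega>. indicator {0<..} (snd \<omega>) * K \<omega> \<partial>(lborel \<Otimes>\<^sub>M lborel))
       = (\<integral>\<^sup>+t. \<integral>\<^sup>+x. indicator {0<..} x * ennreal x * K (t * x, x) \<partial>lborel \<partial>lborel)"
proof -
  have "(\<integral>\<^sup>+\<omega>. indicator {0<..} (snd \<omega>) * K \<omega> \<partial>(lborel \<Otimes>\<^sub>M lborel))
      = (\<integral>\<^sup>+y. \<integral>\<^sup>+x. indicator {0<..} y * K (x, y) \<partial>lborel \<partial>lborel)"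
    by (subst lborel_pair.nn_integral_snd[symmetric]) auto
  also have "\<dots> = (\<integral>\<^sup>+y. \<integral>\<^sup>+t. indicator {0<..} y * ennreal y * K (t * y, y) \<partial>lborel \<partial>lborel)"
  proof (rule nn_integral_cong)
    fix y :: real
    show "(\<integral>\<^sup>+x. indicator {0<..} y * K (x, y) \<partial>lborel)
        = (\<integral>\<^sup>+t. indicator {0<..} y * ennreal y * K (t * y, y) \<partial>lborel)"
    proof (cases "0 < y")
      case True
      have "(\<integral>\<^sup>+x. K (x, y) \<partial>lborel) = ennreal \<bar>y\<bar> * (\<integral>\<^sup>+t. K (0 + y * t, y) \<partial>lborel)"
        by (rule nn_integral_real_affine) (use True in auto)
      then show ?thesis
        using True by (simp add: nn_integral_cmult mult.assoc mult.commute)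
    qed simp
  qed
  also have "\<dots> = (\<integral>\<^sup>+t. \<integral>\<^sup>+x. indicator {0<..} x * ennreal x * K (t * x, x) \<partial>lborel \<partial>lborel)"
    by (rule lborel_pair.Fubini'[symmetric]) (simp add: case_prod_unfold)
  finally show ?thesis .
qed

lemma gamma_dens_measurable [measurable]: "gamma_dens a \<theta> \<in> borel_measurable borel"
  unfolding gamma_dens_def by measurable

lemma gamma_dens_nonneg: "0 < a \<Longrightarrow> 0 < \<theta> \<Longrightarrow> 0 \<le> gamma_dens a \<theta> x"
  unfolding gamma_dens_def by (auto intro!: divide_nonneg_pos mult_pos_pos Gamma_real_pos)

lemma gamma_dens_nonpos: "x \<le> 0 \<Longrightarrow> gamma_dens a \<theta> x = 0"
  unfolding gamma_dens_def by auto

lemma sets_joint [measurable_cong]: "sets (joint a \<theta>1 \<theta>2) = sets (lborel \<Otimes>\<^sub>M lborel)"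
  unfolding joint_def by simp

lemma space_joint: "space (joint a \<theta>1 \<theta>2) = UNIV"
  unfolding joint_def by (simp add: space_pair_measure)

lemma T_measurable [measurable]: "T \<in> borel_measurable (lborel \<Otimes>\<^sub>M lborel)"
  unfolding T_def[abs_def] Z1_def Z2_def by (simp add: case_prod_unfold)

lemma Z2_measurable [measurable]: "Z2 \<in> borel_measurable (lborel \<Otimes>\<^sub>M lborel)"
  unfolding Z2_def by (simp add: case_prod_unfold)

lemma H_S_measurable [measurable]: "H_S \<theta>1 \<theta>2 \<in> borel_measurable (lborel \<Otimes>\<^sub>M lborel)"
  unfolding H_S_def by (simp add: case_prod_unfold)

lemma delta_measurable [measurable]:
  assumes [measurable]: "c \<in> borel_measurable borel"
  shows "delta c \<in> borel_measurable (lborel \<Otimes>\<^sub>M lborel)"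
  unfolding delta_def[abs_def] by measurable

lemma AE_joint_pos: "AE \<omega> in joint a \<theta>1 \<theta>2. 0 < fst \<omega> \<and> 0 < snd \<omega>"
proof -
  have density: "(\<lambda>(x1, x2). ennreal (gamma_dens a \<theta>1 x1 * gamma_dens a \<theta>2 x2))
      \<in> borel_measurable (lborel \<Otimes>\<^sub>M lborel)"
    by measurable
  show ?thesis
    unfolding joint_def AE_density[OF density]
  proof (intro AE_I2 impI)
    fix \<omega> :: "real \<times> real"
    assume "0 < (case \<omega> of (x1, x2) \<Rightarrow> ennreal (gamma_dens a \<theta>1 x1 * gamma_dens a \<theta>2 x2))"
    then have pos: "0 < gamma_dens a \<theta>1 (fst \<omega>) * gamma_dens a \<theta>2 (snd \<omega>)"
      by (cases \<omega>) auto
    show "0 < fst \<omega> \<and> 0 < snd \<omega>"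
    proof (rule ccontr)
      assume "\<not> (0 < fst \<omega> \<and> 0 < snd \<omega>)"
      then have "gamma_dens a \<theta>1 (fst \<omega>) * gamma_dens a \<theta>2 (snd \<omega>) = 0"
        by (auto simp: gamma_dens_nonpos not_less)
      with pos show False
        by simp
    qed
  qed
qed

lemma T_in_Ioc: "0 < fst \<omega> \<Longrightarrow> 0 < snd \<omega> \<Longrightarrow> T \<omega> \<in> {0<..1}"
  by (cases \<omega>) (auto simp: T_def Z1_def Z2_def divide_le_eq_1)

lemma statistics_of_le:
  assumes "0 < x" and "0 < t" "t \<le> 1"
  shows "Z2 (x, t * x) = x" "T (x, t * x) = t" "H_S \<theta>1 \<theta>2 (x, t * x) = ln \<theta>1"
  using assms mult_le_cancel_right1[of t x] by (auto simp: Z2_def T_def Z1_def H_S_def)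

lemma statistics_of_less:
  assumes "0 < x" and "0 < t" "t < 1"
  shows "Z2 (t * x, x) = x" "T (t * x, x) = t" "H_S \<theta>1 \<theta>2 (t * x, x) = ln \<theta>2"
  using assms mult_less_cancel_right1[of t x] by (auto simp: Z2_def T_def Z1_def H_S_def)

text \<open>The integrand of \<open>\<integral>\<^sup>+ G d(joint)\<close> in the coordinates \<open>x = Z\<^sub>2\<close>, \<open>t = T\<close>; the two
  summands are the parts \<open>X\<^sub>2 \<le> X\<^sub>1\<close> and \<open>X\<^sub>1 < X\<^sub>2\<close>.\<close>
definition Z2_T_integrand :: "real \<Rightarrow> real \<Rightarrow> real \<Rightarrow> (real \<times> real \<Rightarrow> ennreal) \<Rightarrow> real \<Rightarrow> real \<Rightarrow> ennreal"
  where "Z2_T_integrand a \<theta>1 \<theta>2 G t x = indicator {0<..} x * ennreal x *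
    (indicator {0<..1} t * ennreal (gamma_dens a \<theta>1 x * gamma_dens a \<theta>2 (t * x)) * G (x, t * x)
   + indicator {0<..<1} t * ennreal (gamma_dens a \<theta>1 (t * x) * gamma_dens a \<theta>2 x) * G (t * x, x))"

lemma Z2_T_integrand_cong:
  assumes "\<And>x. 0 < x \<Longrightarrow> t \<in> {0<..1} \<Longrightarrow> G (x, t * x) = G' (x, t * x)"
    and "\<And>x. 0 < x \<Longrightarrow> t \<in> {0<..<1} \<Longrightarrow> G (t * x, x) = G' (t * x, x)"
  shows "Z2_T_integrand a \<theta>1 \<theta>2 G t = Z2_T_integrand a \<theta>1 \<theta>2 G' t"
  using assms by (auto simp: Z2_T_integrand_def indicator_def fun_eq_iff)

lemma nn_integral_joint_Z2_T:
  fixes G :: "real \<times> real \<Rightarrow> ennreal"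
  assumes [measurable]: "G \<in> borel_measurable (lborel \<Otimes>\<^sub>M lborel)"
  shows "(\<integral>\<^sup>+\<omega>. G \<omega> \<partial>joint a \<theta>1 \<theta>2) = (\<integral>\<^sup>+t. \<integral>\<^sup>+x. Z2_T_integrand a \<theta>1 \<theta>2 G t x \<partial>lborel \<partial>lborel)"
proof -
  define p where "p \<omega> = ennreal (gamma_dens a \<theta>1 (fst \<omega>) * gamma_dens a \<theta>2 (snd \<omega>))" for \<omega>
  define KA where "KA \<omega> = indicator {\<omega>. 0 < snd \<omega> \<and> snd \<omega> \<le> fst \<omega>} \<omega> * p \<omega> * G \<omega>" for \<omega>
  define KB where "KB \<omega> = indicator {\<omega>. 0 < fst \<omega> \<and> fst \<omega> < snd \<omega>} \<omega> * p \<omega> * G \<omega>" for \<omega>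
  have [measurable]: "p \<in> borel_measurable (lborel \<Otimes>\<^sub>M lborel)"
    "KA \<in> borel_measurable (lborel \<Otimes>\<^sub>M lborel)" "KB \<in> borel_measurable (lborel \<Otimes>\<^sub>M lborel)"
    unfolding p_def KA_def KB_def by measurable
  have "joint a \<theta>1 \<theta>2 = density (lborel \<Otimes>\<^sub>M lborel) p"
    unfolding joint_def p_def by (simp add: case_prod_unfold)
  then have "(\<integral>\<^sup>+\<omega>. G \<omega> \<partial>joint a \<theta>1 \<theta>2) = (\<integral>\<^sup>+\<omega>. p \<omega> * G \<omega> \<partial>(lborel \<Otimes>\<^sub>M lborel))"
    by (simp add: nn_integral_density)
  also have "\<dots> = (\<integral>\<^sup>+\<omega>. indicator {0<..} (fst \<omega>) * KA \<omega> + indicator {0<..} (snd \<omega>) * KB \<omega>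
                    \<partial>(lborel \<Otimes>\<^sub>M lborel))"
  proof (rule nn_integral_cong)
    fix \<omega> :: "real \<times> real"
    show "p \<omega> * G \<omega> = indicator {0<..} (fst \<omega>) * KA \<omega> + indicator {0<..} (snd \<omega>) * KB \<omega>"
    proof (cases "0 < fst \<omega> \<and> 0 < snd \<omega>")
      case False
      then have "p \<omega> = 0"
        unfolding p_def by (auto simp: gamma_dens_nonpos)
      then show ?thesis
        unfolding KA_def KB_def by simp
    qed (auto simp: KA_def KB_def indicator_def)
  qed
  also have "\<dots> = (\<integral>\<^sup>+\<omega>. indicator {0<..} (fst \<omega>) * KA \<omega> \<partial>(lborel \<Otimes>\<^sub>M lborel))
                + (\<integral>\<^sup>+\<omega>. indicator {0<..} (snd \<omega>) * KB \<omega> \<partial>(lborel \<Otimes>\<^sub>M lborel))"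
    by (rule nn_integral_add) auto
  also have "\<dots> = (\<integral>\<^sup>+t. \<integral>\<^sup>+x. indicator {0<..} x * ennreal x * KA (x, t * x) \<partial>lborel \<partial>lborel)
                + (\<integral>\<^sup>+t. \<integral>\<^sup>+x. indicator {0<..} x * ennreal x * KB (t * x, x) \<partial>lborel \<partial>lborel)"
    by (simp add: nn_integral_lborel_pair_scale_snd nn_integral_lborel_pair_scale_fst)
  also have "\<dots> = (\<integral>\<^sup>+t. \<integral>\<^sup>+x. indicator {0<..} x * ennreal x * KA (x, t * x)
                                + indicator {0<..} x * ennreal x * KB (t * x, x) \<partial>lborel \<partial>lborel)"
    by (subst nn_integral_add[symmetric]) (auto simp: nn_integral_add)
  also have "\<dots> = (\<integral>\<^sup>+t. \<integral>\<^sup>+x. Z2_T_integrand a \<theta>1 \<theta>2 G t x \<partial>lborel \<partial>lborel)"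
  proof (intro nn_integral_cong)
    fix t x :: real
    show "indicator {0<..} x * ennreal x * KA (x, t * x) + indicator {0<..} x * ennreal x * KB (t * x, x)
        = Z2_T_integrand a \<theta>1 \<theta>2 G t x"
    proof (cases "0 < x")
      case True
      then have "(0 < t * x \<and> t * x \<le> x) \<longleftrightarrow> t \<in> {0<..1}"
        and "(0 < t * x \<and> t * x < x) \<longleftrightarrow> t \<in> {0<..<1}"
        by (auto simp: zero_less_mult_iff mult_le_cancel_right2 mult_less_cancel_right2)
      with True show ?thesis
        unfolding Z2_T_integrand_def KA_def KB_def p_def by (simp add: indicator_def distrib_left)
    qed (simp add: Z2_T_integrand_def)
  qed
  finally show ?thesis .
qed

lemma T_vimage_in_sets_joint: "N \<in> sets borel \<Longrightarrow> T -` N \<in> sets (joint a \<theta>1 \<theta>2)"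
  using measurable_sets[OF T_measurable, of N] by (simp add: space_pair_measure)

lemma emeasure_joint_T_vimage_null:
  assumes N: "N \<in> null_sets lborel"
  shows "emeasure (joint a \<theta>1 \<theta>2) (T -` N) = 0"
proof -
  have [measurable]: "N \<in> sets borel"
    using N by auto
  have "emeasure (joint a \<theta>1 \<theta>2) (T -` N) = (\<integral>\<^sup>+\<omega>. indicator (T -` N) \<omega> \<partial>joint a \<theta>1 \<theta>2)"
    using N by (simp add: T_vimage_in_sets_joint)
  also have "\<dots> = (\<integral>\<^sup>+t. \<integral>\<^sup>+x. Z2_T_integrand a \<theta>1 \<theta>2 (indicator (T -` N)) t x \<partial>lborel \<partial>lborel)"
    by (rule nn_integral_joint_Z2_T) measurable
  also have "\<dots> = 0"
  proof -
    have "Z2_T_integrand a \<theta>1 \<theta>2 (indicator (T -` N)) t = Z2_T_integrand a \<theta>1 \<theta>2 (\<lambda>_. indicator N t) t"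
      for t
      by (rule Z2_T_integrand_cong) (auto simp: statistics_of_le statistics_of_less indicator_def)
    then have "(\<integral>\<^sup>+x. Z2_T_integrand a \<theta>1 \<theta>2 (indicator (T -` N)) t x \<partial>lborel) = 0" if "t \<notin> N" for t
      using that by (simp add: Z2_T_integrand_def)
    with AE_not_in[OF N] show ?thesis
      by (subst nn_integral_cong_AE[where v = "\<lambda>_. 0"]) (auto elim: eventually_mono)
  qed
  finally show ?thesis .
qed

lemma AE_joint_T:
  assumes "AE t in lborel. t \<in> {0<..<1} \<longrightarrow> P t"
  shows "AE \<omega> in joint a \<theta>1 \<theta>2. P (T \<omega>)"
proof -
  from assms obtain N where N: "{t \<in> space lborel. \<not> (t \<in> {0<..<1} \<longrightarrow> P t)} \<subseteq> N"
    and "emeasure lborel N = 0" "N \<in> sets lborel"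
    by (rule AE_E)
  \<comment> \<open>\<open>T = 1\<close> on the diagonal \<open>X\<^sub>1 = X\<^sub>2\<close>, which is a null set\<close>
  then have N1: "N \<union> {1} \<in> null_sets lborel"
    by (intro null_sets.Un) auto
  have "AE \<omega> in joint a \<theta>1 \<theta>2. T \<omega> \<notin> N \<union> {1}"
  proof (rule AE_I)
    show "emeasure (joint a \<theta>1 \<theta>2) (T -` (N \<union> {1})) = 0"
      by (rule emeasure_joint_T_vimage_null[OF N1])
    show "T -` (N \<union> {1}) \<in> sets (joint a \<theta>1 \<theta>2)"
      using N1 by (intro T_vimage_in_sets_joint) auto
  qed (auto simp: space_joint)
  with AE_joint_pos show ?thesis
  proof eventually_elim
    case (elim \<omega>)
    with T_in_Ioc[of \<omega>] N(1) show ?case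
      by auto
  qed
qed

section \<open>Conditional risk given \<open>T\<close>\<close>

lemma mult_gamma_dens_prod_eq:
  fixes a \<theta>1 \<theta>2 x t :: real
  assumes a: "0 < a" and \<theta>: "0 < \<theta>1" "0 < \<theta>2" and x: "0 < x" and t: "0 < t"
  shows "x * (gamma_dens a \<theta>1 x * gamma_dens a \<theta>2 (t * x))
       = 1 / (Gamma a ^ 2 * \<theta>1 powr a * \<theta>2 powr a) * t powr (a - 1)
         * gamma_kernel (2 * a) (1 / \<theta>1 + t / \<theta>2) x"
proof -
  have "x powr (2 * a - 1) = x * x powr (a - 1) * x powr (a - 1)"
    using x powr_add[of x 1 "(a - 1) + (a - 1)"] powr_add[of x "a - 1" "a - 1"] by (simp add: algebra_simps)
  moreover have "exp (- x / \<theta>1) * exp (- (t * x) / \<theta>2) = exp (- ((1 / \<theta>1 + t / \<theta>2) * x))"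
    by (subst exp_add[symmetric]) (simp add: field_simps)
  moreover have "(t * x) powr (a - 1) = t powr (a - 1) * x powr (a - 1)"
    using t x by (simp add: powr_mult)
  ultimately show ?thesis
    unfolding gamma_dens_def gamma_kernel_def using x t \<theta> Gamma_real_pos[OF a]
    by (simp add: field_simps power2_eq_square)
qed

text \<open>\<open>cond_risk a \<theta>1 \<theta>2 u t\<close> is the density of \<open>T\<close> at \<open>t\<close> times the conditional risk of the
  estimate \<open>ln Z\<^sub>2 - u\<close> given \<open>T = t\<close>.\<close>
definition cond_risk :: "real \<Rightarrow> real \<Rightarrow> real \<Rightarrow> real \<Rightarrow> real \<Rightarrow> real" where
  "cond_risk a \<theta>1 \<theta>2 u t = 1 / (Gamma a ^ 2 * \<theta>1 powr a * \<theta>2 powr a) * t powr (a - 1) *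
      (gamma_ln_sq_moment (2 * a) (1 / \<theta>1 + t / \<theta>2) (u + ln \<theta>1)
       + gamma_ln_sq_moment (2 * a) (1 / \<theta>2 + t / \<theta>1) (u + ln \<theta>2))"

lemma cond_risk_nonneg:
  assumes "0 < a" and "0 < \<theta>1" "0 < \<theta>2"
  shows "0 \<le> cond_risk a \<theta>1 \<theta>2 u t"
  using assms Gamma_real_pos[of a] unfolding cond_risk_def
  by (intro mult_nonneg_nonneg add_nonneg_nonneg gamma_ln_sq_moment_nonneg) auto

lemma cond_risk_measurable [measurable]:
  assumes [measurable]: "c \<in> borel_measurable borel"
  shows "(\<lambda>t. cond_risk a \<theta>1 \<theta>2 (c t) t) \<in> borel_measurable lborel"
  unfolding cond_risk_def gamma_ln_sq_moment_def gamma_kernel_def by measurable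

lemma nn_integral_Z2_T_integrand_sq_error:
  fixes a \<theta>1 \<theta>2 u t :: real
  assumes a: "0 < a" and \<theta>: "0 < \<theta>1" "0 < \<theta>2" and t: "0 < t" "t < 1"
  shows "(\<integral>\<^sup>+x. Z2_T_integrand a \<theta>1 \<theta>2 (\<lambda>\<omega>. ennreal ((ln (Z2 \<omega>) - u - H_S \<theta>1 \<theta>2 \<omega>)\<^sup>2)) t x \<partial>lborel)
       = ennreal (cond_risk a \<theta>1 \<theta>2 u t)"
proof -
  define C where "C = 1 / (Gamma a ^ 2 * \<theta>1 powr a * \<theta>2 powr a) * t powr (a - 1)"
  define lA where "lA = 1 / \<theta>1 + t / \<theta>2"
  define lB where "lB = 1 / \<theta>2 + t / \<theta>1"
  have C: "0 \<le> C"
    using Gamma_real_pos[OF a] \<theta> by (simp add: C_def)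
  have l: "0 < lA" "0 < lB"
    using \<theta> t by (auto simp: lA_def lB_def intro!: add_pos_pos divide_pos_pos)
  have s: "0 < 2 * a"
    using a by simp
  have nn_moment: "(\<integral>\<^sup>+x. ennreal (gamma_kernel (2 * a) l x * (ln x - d)\<^sup>2) \<partial>lborel)
      = ennreal (gamma_ln_sq_moment (2 * a) l d)" if "0 < l" for l d
    using has_bochner_integral_gamma_ln_sq_moment[OF s that, of d]
    unfolding gamma_ln_sq_moment_def
    by (intro nn_integral_eq_integral) (auto simp: has_bochner_integral_iff gamma_kernel_nonneg)
  have "Z2_T_integrand a \<theta>1 \<theta>2 (\<lambda>\<omega>. ennreal ((ln (Z2 \<omega>) - u - H_S \<theta>1 \<theta>2 \<omega>)\<^sup>2)) t x
      = ennreal C * (ennreal (gamma_kernel (2 * a) lA x * (ln x - (u + ln \<theta>1))\<^sup>2)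
                   + ennreal (gamma_kernel (2 * a) lB x * (ln x - (u + ln \<theta>2))\<^sup>2))" for x
  proof (cases "0 < x")
    case True
    have "x * (gamma_dens a \<theta>1 x * gamma_dens a \<theta>2 (t * x)) = C * gamma_kernel (2 * a) lA x"
      and "x * (gamma_dens a \<theta>1 (t * x) * gamma_dens a \<theta>2 x) = C * gamma_kernel (2 * a) lB x"
      using mult_gamma_dens_prod_eq[OF a \<theta> True t(1)] mult_gamma_dens_prod_eq[OF a \<theta>(2,1) True t(1)]
      by (simp_all add: C_def lA_def lB_def mult_ac)
    moreover have "0 \<le> gamma_dens a \<theta>1 x * gamma_dens a \<theta>2 (t * x)"
      and "0 \<le> gamma_dens a \<theta>1 (t * x) * gamma_dens a \<theta>2 x"
      using a \<theta> by (simp_all add: gamma_dens_nonneg)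
    ultimately show ?thesis
      using True t C gamma_kernel_nonneg[of "2 * a" lA x] gamma_kernel_nonneg[of "2 * a" lB x]
      unfolding Z2_T_integrand_def
      by (simp add: statistics_of_le statistics_of_less ennreal_mult[symmetric] distrib_left mult.assoc)
        (simp add: ennreal_mult'[symmetric] mult.assoc[symmetric] diff_diff_eq)
  qed (simp add: Z2_T_integrand_def gamma_kernel_def)
  then have "(\<integral>\<^sup>+x. Z2_T_integrand a \<theta>1 \<theta>2 (\<lambda>\<omega>. ennreal ((ln (Z2 \<omega>) - u - H_S \<theta>1 \<theta>2 \<omega>)\<^sup>2)) t x \<partial>lborel)
      = ennreal C * (ennreal (gamma_ln_sq_moment (2 * a) lA (u + ln \<theta>1))
                   + ennreal (gamma_ln_sq_moment (2 * a) lB (u + ln \<theta>2)))"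
    using l by (simp add: nn_integral_cmult nn_integral_add nn_moment)
  also have "\<dots> = ennreal (cond_risk a \<theta>1 \<theta>2 u t)"
  proof -
    have "cond_risk a \<theta>1 \<theta>2 u t
        = C * (gamma_ln_sq_moment (2 * a) lA (u + ln \<theta>1) + gamma_ln_sq_moment (2 * a) lB (u + ln \<theta>2))"
      by (simp add: cond_risk_def C_def lA_def lB_def)
    then show ?thesis
      using C by (simp add: ennreal_mult gamma_ln_sq_moment_nonneg add_nonneg_nonneg)
  qed
  finally show ?thesis .
qed

definition cond_risk_integral :: "real \<Rightarrow> real \<Rightarrow> real \<Rightarrow> (real \<Rightarrow> real) \<Rightarrow> ennreal" where
  "cond_risk_integral a \<theta>1 \<theta>2 c = (\<integral>\<^sup>+t. indicator {0<..<1} t * ennreal (cond_risk a \<theta>1 \<theta>2 (c t) t) \<partial>lborel)"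

lemma nn_integral_sq_error_joint:
  fixes a \<theta>1 \<theta>2 :: real and c :: "real \<Rightarrow> real"
  assumes a: "0 < a" and \<theta>: "0 < \<theta>1" "0 < \<theta>2" and [measurable]: "c \<in> borel_measurable borel"
  shows "(\<integral>\<^sup>+\<omega>. ennreal ((delta c \<omega> - H_S \<theta>1 \<theta>2 \<omega>)\<^sup>2) \<partial>joint a \<theta>1 \<theta>2) = cond_risk_integral a \<theta>1 \<theta>2 c"
proof -
  define G where "G \<omega> = ennreal ((delta c \<omega> - H_S \<theta>1 \<theta>2 \<omega>)\<^sup>2)" for \<omega>
  have "(\<integral>\<^sup>+\<omega>. G \<omega> \<partial>joint a \<theta>1 \<theta>2) = (\<integral>\<^sup>+t. \<integral>\<^sup>+x. Z2_T_integrand a \<theta>1 \<theta>2 G t x \<partial>lborel \<partial>lborel)"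
    unfolding G_def by (rule nn_integral_joint_Z2_T) measurable
  also have "\<dots> = (\<integral>\<^sup>+t. indicator {0<..<1} t * ennreal (cond_risk a \<theta>1 \<theta>2 (c t) t) \<partial>lborel)"
  proof (intro nn_integral_cong_AE eventually_mono[OF AE_lborel_singleton[of 1]])
    fix t :: real
    assume "t \<noteq> 1"
    show "(\<integral>\<^sup>+x. Z2_T_integrand a \<theta>1 \<theta>2 G t x \<partial>lborel)
        = indicator {0<..<1} t * ennreal (cond_risk a \<theta>1 \<theta>2 (c t) t)"
    proof (cases "t \<in> {0<..<1}")
      case True
      have "Z2_T_integrand a \<theta>1 \<theta>2 G t
          = Z2_T_integrand a \<theta>1 \<theta>2 (\<lambda>\<omega>. ennreal ((ln (Z2 \<omega>) - c t - H_S \<theta>1 \<theta>2 \<omega>)\<^sup>2)) t"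
        by (rule Z2_T_integrand_cong) (auto simp: G_def delta_def statistics_of_le statistics_of_less)
      with True show ?thesis
        using nn_integral_Z2_T_integrand_sq_error[OF a \<theta>, of t "c t"] by simp
    next
      case False
      with \<open>t \<noteq> 1\<close> have "t \<notin> {0<..1}"
        by auto
      with False show ?thesis
        by (simp add: Z2_T_integrand_def)
    qed
  qed
  finally show ?thesis
    unfolding G_def cond_risk_integral_def .
qed

lemma weighted_sum_nonneg:
  fixes wA wB pA pB :: real
  assumes "0 \<le> wA" "0 \<le> wB" "0 \<le> pA + pB"
    and "(wB \<le> wA \<and> 0 \<le> pA) \<or> (wA \<le> wB \<and> 0 \<le> pB)"
  shows "0 \<le> wA * pA + wB * pB"
  using assms(4)
proof
  assume "wB \<le> wA \<and> 0 \<le> pA"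
  then have "wB * pA \<le> wA * pA"
    by (intro mult_right_mono) auto
  moreover have "0 \<le> wB * (pA + pB)"
    using assms by simp
  ultimately show ?thesis
    by (simp add: algebra_simps)
next
  assume "wA \<le> wB \<and> 0 \<le> pB"
  then have "wA * pB \<le> wB * pB"
    by (intro mult_right_mono) auto
  moreover have "0 \<le> wA * (pA + pB)"
    using assms by simp
  ultimately show ?thesis
    by (simp add: algebra_simps)
qed

lemma weighted_sq_dist_mono:
  fixes wA wB pA pB u v :: real
  assumes w: "0 \<le> wA" "0 \<le> wB" and slope: "0 \<le> wA * (v - pA) + wB * (v - pB)" and vu: "v \<le> u"
  shows "wA * (v - pA)\<^sup>2 + wB * (v - pB)\<^sup>2 \<le> wA * (u - pA)\<^sup>2 + wB * (u - pB)\<^sup>2"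
    and "0 < wA + wB \<Longrightarrow> v < u \<Longrightarrow>
           wA * (v - pA)\<^sup>2 + wB * (v - pB)\<^sup>2 < wA * (u - pA)\<^sup>2 + wB * (u - pB)\<^sup>2"
proof -
  have diff: "(wA * (u - pA)\<^sup>2 + wB * (u - pB)\<^sup>2) - (wA * (v - pA)\<^sup>2 + wB * (v - pB)\<^sup>2)
      = (u - v) * ((wA + wB) * (u - v) + 2 * (wA * (v - pA) + wB * (v - pB)))"
    by (simp add: power2_eq_square algebra_simps)
  have "0 \<le> (u - v) * ((wA + wB) * (u - v) + 2 * (wA * (v - pA) + wB * (v - pB)))"
    using w slope vu by simp
  with diff show "wA * (v - pA)\<^sup>2 + wB * (v - pB)\<^sup>2 \<le> wA * (u - pA)\<^sup>2 + wB * (u - pB)\<^sup>2"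
    by linarith
  assume "0 < wA + wB" and "v < u"
  then have "0 < (u - v) * ((wA + wB) * (u - v) + 2 * (wA * (v - pA) + wB * (v - pB)))"
    using slope by (simp add: add_pos_nonneg)
  with diff show "wA * (v - pA)\<^sup>2 + wB * (v - pB)\<^sup>2 < wA * (u - pA)\<^sup>2 + wB * (u - pB)\<^sup>2"
    by linarith
qed

lemma gamma_weight_ln_rate_comonotone:
  fixes s \<theta>1 \<theta>2 t :: real
  assumes s: "0 < s" and \<theta>: "0 < \<theta>2" "\<theta>2 \<le> \<theta>1" and t: "0 < t" "t < 1"
  shows "Gamma s * (1 / \<theta>2 + t / \<theta>1) powr (- s) \<le> Gamma s * (1 / \<theta>1 + t / \<theta>2) powr (- s)"
    and "ln (1 + t) \<le> ln (\<theta>1 * (1 / \<theta>1 + t / \<theta>2))"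
proof -
  have \<theta>1: "0 < \<theta>1"
    using \<theta> by simp
  have "1 / \<theta>1 \<le> 1 / \<theta>2"
    using \<theta> by (simp add: divide_simps)
  then have "0 \<le> (1 / \<theta>2 - 1 / \<theta>1) * (1 - t)"
    using t by simp
  also have "\<dots> = (1 / \<theta>2 + t / \<theta>1) - (1 / \<theta>1 + t / \<theta>2)"
    using \<theta>1 \<theta> by (simp add: field_simps)
  finally have "(1 / \<theta>2 + t / \<theta>1) powr (- s) \<le> (1 / \<theta>1 + t / \<theta>2) powr (- s)"
    using s \<theta>1 \<theta> t by (intro powr_mono2') (auto intro: add_pos_pos)
  then show "Gamma s * (1 / \<theta>2 + t / \<theta>1) powr (- s) \<le> Gamma s * (1 / \<theta>1 + t / \<theta>2) powr (- s)"
    using Gamma_real_pos[OF s] by simp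
  have "t \<le> t * \<theta>1 / \<theta>2"
    using \<theta> t by (simp add: divide_simps)
  moreover have "\<theta>1 * (1 / \<theta>1 + t / \<theta>2) = 1 + t * \<theta>1 / \<theta>2"
    using \<theta>1 by (simp add: field_simps)
  ultimately show "ln (1 + t) \<le> ln (\<theta>1 * (1 / \<theta>1 + t / \<theta>2))"
    using t by (intro ln_mono) auto
qed

text \<open>The derivative in \<open>u\<close> of the quadratic part of \<open>cond_risk\<close> is nonnegative at \<open>\<Phi>\<^sub>*(t)\<close>:
  the rate factors multiply to at least \<open>(1 + t)\<^sup>2\<close>, and the larger weight goes with the
  larger factor.\<close>
lemma ln_rate_weighted_sum_nonneg:
  fixes s \<theta>1 \<theta>2 t :: real
  assumes s: "0 < s" and \<theta>: "0 < \<theta>1" "0 < \<theta>2" and t: "0 < t" "t < 1"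
  shows "0 \<le> Gamma s * (1 / \<theta>1 + t / \<theta>2) powr (- s) * (ln (\<theta>1 * (1 / \<theta>1 + t / \<theta>2)) - ln (1 + t))
            + Gamma s * (1 / \<theta>2 + t / \<theta>1) powr (- s) * (ln (\<theta>2 * (1 / \<theta>2 + t / \<theta>1)) - ln (1 + t))"
proof (rule weighted_sum_nonneg)
  show "0 \<le> Gamma s * (1 / \<theta>1 + t / \<theta>2) powr (- s)" and "0 \<le> Gamma s * (1 / \<theta>2 + t / \<theta>1) powr (- s)"
    using Gamma_real_pos[OF s] by simp_all
  have "0 \<le> (\<theta>1 - \<theta>2)\<^sup>2"
    by simp
  then have "2 * \<theta>1 * \<theta>2 \<le> \<theta>1 * \<theta>1 + \<theta>2 * \<theta>2"
    by (simp add: power2_eq_square algebra_simps)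
  then have "2 \<le> \<theta>1 / \<theta>2 + \<theta>2 / \<theta>1"
    using \<theta> by (simp add: field_simps)
  then have "t * 2 \<le> t * (\<theta>1 / \<theta>2 + \<theta>2 / \<theta>1)"
    using t by (intro mult_left_mono) auto
  moreover have "(\<theta>1 * (1 / \<theta>1 + t / \<theta>2)) * (\<theta>2 * (1 / \<theta>2 + t / \<theta>1))
      = 1 + t * (\<theta>1 / \<theta>2 + \<theta>2 / \<theta>1) + t * t"
    using \<theta> by (simp add: field_simps)
  moreover have "(1 + t) * (1 + t) = 1 + t * 2 + t * t"
    by (simp add: algebra_simps)
  ultimately have "(1 + t) * (1 + t) \<le> (\<theta>1 * (1 / \<theta>1 + t / \<theta>2)) * (\<theta>2 * (1 / \<theta>2 + t / \<theta>1))"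
    by linarith
  then have "ln ((1 + t) * (1 + t)) \<le> ln ((\<theta>1 * (1 / \<theta>1 + t / \<theta>2)) * (\<theta>2 * (1 / \<theta>2 + t / \<theta>1)))"
    using t by (intro ln_mono) auto
  moreover have "ln ((\<theta>1 * (1 / \<theta>1 + t / \<theta>2)) * (\<theta>2 * (1 / \<theta>2 + t / \<theta>1)))
      = ln (\<theta>1 * (1 / \<theta>1 + t / \<theta>2)) + ln (\<theta>2 * (1 / \<theta>2 + t / \<theta>1))"
    using \<theta> t by (intro ln_mult_pos) (auto intro!: mult_pos_pos add_pos_pos)
  moreover have "ln ((1 + t) * (1 + t)) = ln (1 + t) + ln (1 + t)"
    using t by (intro ln_mult_pos) auto
  ultimately show "0 \<le> (ln (\<theta>1 * (1 / \<theta>1 + t / \<theta>2)) - ln (1 + t))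
                       + (ln (\<theta>2 * (1 / \<theta>2 + t / \<theta>1)) - ln (1 + t))"
    by linarith
  show "Gamma s * (1 / \<theta>2 + t / \<theta>1) powr (- s) \<le> Gamma s * (1 / \<theta>1 + t / \<theta>2) powr (- s)
          \<and> 0 \<le> ln (\<theta>1 * (1 / \<theta>1 + t / \<theta>2)) - ln (1 + t)
      \<or> Gamma s * (1 / \<theta>1 + t / \<theta>2) powr (- s) \<le> Gamma s * (1 / \<theta>2 + t / \<theta>1) powr (- s)
          \<and> 0 \<le> ln (\<theta>2 * (1 / \<theta>2 + t / \<theta>1)) - ln (1 + t)"
    using gamma_weight_ln_rate_comonotone[OF s \<theta>(2) _ t] gamma_weight_ln_rate_comonotone[OF s \<theta>(1) _ t]
    by (cases "\<theta>2 \<le> \<theta>1") auto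
qed

lemma cond_risk_Phi_star_le:
  fixes a \<theta>1 \<theta>2 t u :: real
  assumes a: "0 < a" and \<theta>: "0 < \<theta>1" "0 < \<theta>2" and t: "0 < t" "t < 1"
    and u: "Phi_star a t \<le> u"
  shows "cond_risk a \<theta>1 \<theta>2 (Phi_star a t) t \<le> cond_risk a \<theta>1 \<theta>2 u t"
    and "Phi_star a t < u \<Longrightarrow> cond_risk a \<theta>1 \<theta>2 (Phi_star a t) t < cond_risk a \<theta>1 \<theta>2 u t"
proof -
  define s where "s = 2 * a"
  define lA where "lA = 1 / \<theta>1 + t / \<theta>2"
  define lB where "lB = 1 / \<theta>2 + t / \<theta>1"
  define wA where "wA = Gamma s * lA powr (- s)"
  define wB where "wB = Gamma s * lB powr (- s)"
  define pA where "pA = Digamma s - ln (\<theta>1 * lA)"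
  define pB where "pB = Digamma s - ln (\<theta>2 * lB)"
  define C where "C = 1 / (Gamma a ^ 2 * \<theta>1 powr a * \<theta>2 powr a) * t powr (a - 1)"
  define K where "K = gamma_ln_sq_moment s lA (Digamma s - ln lA) + gamma_ln_sq_moment s lB (Digamma s - ln lB)"
  have s: "0 < s" and l: "0 < lA" "0 < lB"
    using a \<theta> t by (auto simp: s_def lA_def lB_def intro!: add_pos_pos divide_pos_pos)
  have w: "0 < wA" "0 < wB"
    using l Gamma_real_pos[OF s] by (simp_all add: wA_def wB_def)
  have C: "0 < C"
    using Gamma_real_pos[OF a] \<theta> t by (simp add: C_def)
  have cond_risk_eq: "cond_risk a \<theta>1 \<theta>2 v t = C * (K + (wA * (v - pA)\<^sup>2 + wB * (v - pB)\<^sup>2))" for v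
  proof -
    have "cond_risk a \<theta>1 \<theta>2 v t
        = C * (gamma_ln_sq_moment s lA (v + ln \<theta>1) + gamma_ln_sq_moment s lB (v + ln \<theta>2))"
      by (simp add: cond_risk_def C_def s_def lA_def lB_def)
    also have "\<dots> = C * (K + (wA * (v - pA)\<^sup>2 + wB * (v - pB)\<^sup>2))"
      using gamma_ln_sq_moment_eq[OF s l(1), of "v + ln \<theta>1"] gamma_ln_sq_moment_eq[OF s l(2), of "v + ln \<theta>2"]
        \<theta> l
      by (simp add: K_def wA_def wB_def pA_def pB_def ln_mult_pos algebra_simps)
    finally show ?thesis .
  qed
  have "0 \<le> wA * (Phi_star a t - pA) + wB * (Phi_star a t - pB)"
    using ln_rate_weighted_sum_nonneg[OF s \<theta> t]
    by (simp add: Phi_star_def wA_def wB_def pA_def pB_def lA_def lB_def s_def)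
  note mono = weighted_sq_dist_mono[OF less_imp_le[OF w(1)] less_imp_le[OF w(2)] this u]
  show "cond_risk a \<theta>1 \<theta>2 (Phi_star a t) t \<le> cond_risk a \<theta>1 \<theta>2 u t"
    unfolding cond_risk_eq using mono(1) C by simp
  assume "Phi_star a t < u"
  then show "cond_risk a \<theta>1 \<theta>2 (Phi_star a t) t < cond_risk a \<theta>1 \<theta>2 u t"
    unfolding cond_risk_eq using mono(2) w C by simp
qed

lemma cond_risk_Phi_I_le:
  fixes a \<theta>1 \<theta>2 t :: real and c :: "real \<Rightarrow> real"
  assumes "0 < a" and "0 < \<theta>1" "0 < \<theta>2" and "0 < t" "t < 1"
  shows "cond_risk a \<theta>1 \<theta>2 (Phi_I a c t) t \<le> cond_risk a \<theta>1 \<theta>2 (c t) t"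
    and "Phi_star a t < c t \<Longrightarrow> cond_risk a \<theta>1 \<theta>2 (Phi_I a c t) t < cond_risk a \<theta>1 \<theta>2 (c t) t"
  using cond_risk_Phi_star_le[OF assms, of "c t"] by (auto simp: Phi_I_def Phi_star_def)

section \<open>Risk of the truncated estimator\<close>

lemma risk_delta_eq_cond_risk_integral:
  assumes "0 < a" and "0 < \<theta>1" "0 < \<theta>2" and [measurable]: "c \<in> borel_measurable borel"
  shows "risk a \<theta>1 \<theta>2 (delta c) = enn2real (cond_risk_integral a \<theta>1 \<theta>2 c)"
  unfolding risk_def nn_integral_sq_error_joint[OF assms, symmetric]
  by (rule integral_eq_nn_integral) auto

lemma cond_risk_integral_finite:
  assumes "0 < a" and "0 < \<theta>1" "0 < \<theta>2" and [measurable]: "c \<in> borel_measurable borel"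
    and "finite_risk a \<theta>1 \<theta>2 (delta c)"
  shows "cond_risk_integral a \<theta>1 \<theta>2 c < \<infinity>"
  using assms(5) unfolding finite_risk_def nn_integral_sq_error_joint[OF assms(1-4), symmetric]
  by (simp add: integrable_iff_bounded)

text \<open>If \<open>c\<close> is not Borel, \<open>delta c\<close> need not be measurable and its risk is then the junk
  value \<open>0\<close>; hence the unconditional inequality.\<close>
lemma risk_delta_cong:
  fixes c c' :: "real \<Rightarrow> real"
  assumes [measurable]: "c' \<in> borel_measurable borel" and eq: "\<forall>t\<in>{0<..1}. c t = c' t"
  shows "finite_risk a \<theta>1 \<theta>2 (delta c) \<Longrightarrow>
           finite_risk a \<theta>1 \<theta>2 (delta c') \<and> risk a \<theta>1 \<theta>2 (delta c) = risk a \<theta>1 \<theta>2 (delta c')"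
    and "risk a \<theta>1 \<theta>2 (delta c) \<le> risk a \<theta>1 \<theta>2 (delta c')"
proof -
  have AE: "AE \<omega> in joint a \<theta>1 \<theta>2. (delta c \<omega> - H_S \<theta>1 \<theta>2 \<omega>)\<^sup>2 = (delta c' \<omega> - H_S \<theta>1 \<theta>2 \<omega>)\<^sup>2"
    using AE_joint_pos by eventually_elim (use T_in_Ioc eq in \<open>simp add: delta_def\<close>)
  have m': "(\<lambda>\<omega>. (delta c' \<omega> - H_S \<theta>1 \<theta>2 \<omega>)\<^sup>2) \<in> borel_measurable (joint a \<theta>1 \<theta>2)"
    by measurable
  show "finite_risk a \<theta>1 \<theta>2 (delta c') \<and> risk a \<theta>1 \<theta>2 (delta c) = risk a \<theta>1 \<theta>2 (delta c')"
    if "finite_risk a \<theta>1 \<theta>2 (delta c)"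
    using that integrable_cong_AE_imp[OF _ m' AE] integral_cong_AE[OF _ m' AE]
    unfolding finite_risk_def risk_def by auto
  then show "risk a \<theta>1 \<theta>2 (delta c) \<le> risk a \<theta>1 \<theta>2 (delta c')"
    unfolding finite_risk_def risk_def
    by (cases "integrable (joint a \<theta>1 \<theta>2) (\<lambda>\<omega>. (delta c \<omega> - H_S \<theta>1 \<theta>2 \<omega>)\<^sup>2)")
      (simp_all add: not_integrable_integral_eq)
qed

lemma Phi_I_measurable [measurable]:
  assumes [measurable]: "c \<in> borel_measurable borel"
  shows "Phi_I a c \<in> borel_measurable borel"
  unfolding Phi_I_def[abs_def] by measurable

lemma cond_risk_integral_Phi_I_le:
  assumes "0 < a" and "0 < \<theta>1" "0 < \<theta>2"
  shows "cond_risk_integral a \<theta>1 \<theta>2 (Phi_I a c) \<le> cond_risk_integral a \<theta>1 \<theta>2 c"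
  unfolding cond_risk_integral_def
proof (rule nn_integral_mono)
  fix t :: real
  show "indicator {0<..<1} t * ennreal (cond_risk a \<theta>1 \<theta>2 (Phi_I a c t) t)
      \<le> indicator {0<..<1} t * ennreal (cond_risk a \<theta>1 \<theta>2 (c t) t)"
    using cond_risk_Phi_I_le(1)[OF assms, of t c] by (cases "t \<in> {0<..<1}") (auto intro: ennreal_leI)
qed

lemma cond_risk_integral_Phi_I_less:
  assumes a: "0 < a" and \<theta>: "0 < \<theta>1" "0 < \<theta>2" and [measurable]: "c \<in> borel_measurable borel"
    and fin: "cond_risk_integral a \<theta>1 \<theta>2 c < \<infinity>"
    and not_AE: "\<not> (AE t in lborel. t \<in> {0<..<1} \<longrightarrow> c t \<le> Phi_star a t)"
  shows "cond_risk_integral a \<theta>1 \<theta>2 (Phi_I a c) < cond_risk_integral a \<theta>1 \<theta>2 c"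
  unfolding cond_risk_integral_def
proof (rule nn_integral_less)
  show "(\<integral>\<^sup>+t. indicator {0<..<1} t * ennreal (cond_risk a \<theta>1 \<theta>2 (Phi_I a c t) t) \<partial>lborel) \<noteq> \<infinity>"
    using cond_risk_integral_Phi_I_le[OF a \<theta>, of c] fin unfolding cond_risk_integral_def by order
  show "AE t in lborel. indicator {0<..<1} t * ennreal (cond_risk a \<theta>1 \<theta>2 (Phi_I a c t) t)
      \<le> indicator {0<..<1} t * ennreal (cond_risk a \<theta>1 \<theta>2 (c t) t)"
    using cond_risk_Phi_I_le(1)[OF a \<theta>, of _ c]
    by (intro AE_I2) (auto simp: indicator_def intro: ennreal_leI)
  show "\<not> (AE t in lborel. indicator {0<..<1} t * ennreal (cond_risk a \<theta>1 \<theta>2 (c t) t)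
             \<le> indicator {0<..<1} t * ennreal (cond_risk a \<theta>1 \<theta>2 (Phi_I a c t) t))"
  proof
    assume "AE t in lborel. indicator {0<..<1} t * ennreal (cond_risk a \<theta>1 \<theta>2 (c t) t)
             \<le> indicator {0<..<1} t * ennreal (cond_risk a \<theta>1 \<theta>2 (Phi_I a c t) t)"
    then have "AE t in lborel. t \<in> {0<..<1} \<longrightarrow> c t \<le> Phi_star a t"
    proof eventually_elim
      case (elim t)
      show ?case
      proof
        assume t: "t \<in> {0<..<1}"
        with elim have "cond_risk a \<theta>1 \<theta>2 (c t) t \<le> cond_risk a \<theta>1 \<theta>2 (Phi_I a c t) t"
          using cond_risk_nonneg[OF a \<theta>] by (simp add: ennreal_le_iff)
        with t show "c t \<le> Phi_star a t"
          using cond_risk_Phi_I_le(2)[OF a \<theta>, of t c] by fastforce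
      qed
    qed
    with not_AE show False ..
  qed
qed measurable

lemma risk_delta_Phi_I_le:
  fixes c :: "real \<Rightarrow> real"
  assumes a: "0 < a" and \<theta>: "0 < \<theta>1" "0 < \<theta>2" and c [measurable]: "c \<in> borel_measurable borel"
    and fin: "finite_risk a \<theta>1 \<theta>2 (delta c)"
  shows "risk a \<theta>1 \<theta>2 (delta (Phi_I a c)) \<le> risk a \<theta>1 \<theta>2 (delta c)"
    and "\<not> (AE t in lborel. t \<in> {0<..<1} \<longrightarrow> c t \<le> Phi_star a t) \<Longrightarrow>
           risk a \<theta>1 \<theta>2 (delta (Phi_I a c)) < risk a \<theta>1 \<theta>2 (delta c)"
proof -
  note finite = cond_risk_integral_finite[OF a \<theta> c fin]
  note le = cond_risk_integral_Phi_I_le[OF a \<theta>, of c]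
  show "risk a \<theta>1 \<theta>2 (delta (Phi_I a c)) \<le> risk a \<theta>1 \<theta>2 (delta c)"
    using le finite by (simp add: risk_delta_eq_cond_risk_integral[OF a \<theta>] enn2real_mono)
  assume "\<not> (AE t in lborel. t \<in> {0<..<1} \<longrightarrow> c t \<le> Phi_star a t)"
  from cond_risk_integral_Phi_I_less[OF a \<theta> c finite this] le finite
  show "risk a \<theta>1 \<theta>2 (delta (Phi_I a c)) < risk a \<theta>1 \<theta>2 (delta c)"
    by (simp add: risk_delta_eq_cond_risk_integral[OF a \<theta>] order.strict_trans1)
qed

lemma not_AE_le_Phi_star:
  assumes eq: "\<forall>t\<in>{0<..1}. \<Phi> t = c t"
    and pos: "0 < measure (joint a \<theta>1 \<theta>2) {\<omega> \<in> space (joint a \<theta>1 \<theta>2). \<Phi> (T \<omega>) > Phi_star a (T \<omega>)}"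
  shows "\<not> (AE t in lborel. t \<in> {0<..<1} \<longrightarrow> c t \<le> Phi_star a t)"
proof
  assume "AE t in lborel. t \<in> {0<..<1} \<longrightarrow> c t \<le> Phi_star a t"
  then have "AE \<omega> in joint a \<theta>1 \<theta>2. c (T \<omega>) \<le> Phi_star a (T \<omega>)"
    by (rule AE_joint_T)
  with AE_joint_pos have "AE \<omega> in joint a \<theta>1 \<theta>2. \<not> \<Phi> (T \<omega>) > Phi_star a (T \<omega>)"
    by eventually_elim (use T_in_Ioc eq in force)
  from emeasure_eq_0_AE[OF this] pos show False
    by (simp add: measure_def)
qed

theorem theorem2p2:
  fixes \<alpha> :: real and \<Phi> :: "real \<Rightarrow> real"
  assumes alpha_pos: "0 < \<alpha>"
    and meas: "\<Phi> \<in> borel_measurable (restrict_space borel {0<..1})"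
    and fin: "\<forall>\<theta>1 \<theta>2. 0 < \<theta>1 \<and> 0 < \<theta>2 \<longrightarrow> finite_risk \<alpha> \<theta>1 \<theta>2 (delta \<Phi>)"
    and improv: "\<exists>\<theta>1 \<theta>2. 0 < \<theta>1 \<and> 0 < \<theta>2 \<and>
        measure (joint \<alpha> \<theta>1 \<theta>2) {\<omega> \<in> space (joint \<alpha> \<theta>1 \<theta>2).
            \<Phi> (T \<omega>) > Phi_star \<alpha> (T \<omega>)} > 0"
  shows "(\<forall>\<theta>1 \<theta>2. 0 < \<theta>1 \<and> 0 < \<theta>2 \<longrightarrow>
            risk \<alpha> \<theta>1 \<theta>2 (delta (Phi_I \<alpha> \<Phi>)) \<le> risk \<alpha> \<theta>1 \<theta>2 (delta \<Phi>))
       \<and> (\<exists>\<theta>1 \<theta>2. 0 < \<theta>1 \<and> 0 < \<theta>2 \<and>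
            risk \<alpha> \<theta>1 \<theta>2 (delta (Phi_I \<alpha> \<Phi>)) < risk \<alpha> \<theta>1 \<theta>2 (delta \<Phi>))"
proof -
  define c where "c t = (if t \<in> {0<..1} then \<Phi> t else 0)" for t
  have c [measurable]: "c \<in> borel_measurable borel"
    using meas unfolding c_def[abs_def] by (subst (asm) measurable_restrict_space_iff) auto
  have eq: "\<forall>t\<in>{0<..1}. \<Phi> t = c t" and eq_I: "\<forall>t\<in>{0<..1}. Phi_I \<alpha> \<Phi> t = Phi_I \<alpha> c t"
    by (simp_all add: c_def Phi_I_def)
  have risks: "risk \<alpha> \<theta>1 \<theta>2 (delta (Phi_I \<alpha> \<Phi>)) \<le> risk \<alpha> \<theta>1 \<theta>2 (delta (Phi_I \<alpha> c))"
    "risk \<alpha> \<theta>1 \<theta>2 (delta \<Phi>) = risk \<alpha> \<theta>1 \<theta>2 (delta c)" "finite_risk \<alpha> \<theta>1 \<theta>2 (delta c)"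
    if "0 < \<theta>1" "0 < \<theta>2" for \<theta>1 \<theta>2
    using risk_delta_cong[OF _ eq_I] risk_delta_cong(1)[OF _ eq] fin that by auto
  have "risk \<alpha> \<theta>1 \<theta>2 (delta (Phi_I \<alpha> \<Phi>)) \<le> risk \<alpha> \<theta>1 \<theta>2 (delta \<Phi>)"
    if "0 < \<theta>1" "0 < \<theta>2" for \<theta>1 \<theta>2
    using risks[OF that] risk_delta_Phi_I_le(1)[OF alpha_pos that c risks(3)[OF that]] by simp
  moreover obtain \<theta>1 \<theta>2 where \<theta>: "0 < \<theta>1" "0 < \<theta>2"
    and pos: "0 < measure (joint \<alpha> \<theta>1 \<theta>2) {\<omega> \<in> space (joint \<alpha> \<theta>1 \<theta>2). \<Phi> (T \<omega>) > Phi_star \<alpha> (T \<omega>)}"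
    using improv by blast
  moreover have "risk \<alpha> \<theta>1 \<theta>2 (delta (Phi_I \<alpha> \<Phi>)) < risk \<alpha> \<theta>1 \<theta>2 (delta \<Phi>)"
    using risks[OF \<theta>] risk_delta_Phi_I_le(2)[OF alpha_pos \<theta> c risks(3)[OF \<theta>] not_AE_le_Phi_star[OF eq pos]]
    by simp
  ultimately show ?thesis
    by blast
qed

end
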